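(* Let $n>1$ and $k\ge 1$ be integers and let $t_1,\ldots,t_k$ be positive divisors of $n$. There exists $\varepsilon<1$ such that the family GRDH with parameters $n,k,t_1,\ldots,t_k$ is $\varepsilon$-almost-$\Delta$-universal if and only if $n$ is odd and $t_1=\cdots=t_k=1$. Moreover, if $n$ is odd and $t_1=\cdots=t_k=1$, then GRDH (i.e., RDH) is $\frac{1}{p-1}$-almost-$\Delta$-universal, where $p$ is the smallest prime divisor of $n$, and this bound is tight: there exist distinct $\mathbf{m},\mathbf{m}'\in\mathbb{Z}_n^k$ and $b\in\mathbb{Z}_n$ with $\Pr_{\mathbf{x}}[\Upsilon_{\mathbf{x}}(\mathbf{m})-\Upsilon_{\mathbf{x}}(\mathbf{m}')=b]=\frac{1}{p-1}$.
   Context: Let $n>1$, $k\ge1$ be integers and $t_1,\ldots,t_k$ positive divisors of $n$. The family GRDH consists of the functions $\Upsilon_{\mathbf{x}}:\mathbb{Z}_n^k\to\mathbb{Z}_n$, $\Upsilon_{\mathbf{x}}(\mathbf{m})=\sum_{i=1}^k m_ix_i \bmod n$, indexed by keys $\mathbf{x}=\langle x_1,\ldots,x_k\rangle\in\mathbb{Z}_n^k$ satisfying $\gcd(x_i,n)=t_i$ for $1\le i\le k$. When $t_1=\cdots=t_k=1$ the family is called RDH. All probabilities are over a key chosen uniformly at random from the set of admissible keys. The family is $\varepsilon$-almost-$\Delta$-universal if for all distinct $\mathbf{m},\mathbf{m}'\in\mathbb{Z}_n^k$ and all $b\in\mathbb{Z}_n$, $\Pr_{\mathbf{x}}[\Upsilon_{\mathbf{x}}(\mathbf{m})-\Upsilon_{\mathbf{x}}(\mathbf{m}')=b]\le\varepsilon$,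 subtraction taken in $\mathbb{Z}_n$. *)

theory Defs
  imports "HOL-Library.FuncSet" "HOL-Computational_Algebra.Primes" Complex_Main
begin

text \<open>Elements of Z_n are represented by integers in {0..<n}; vectors in Z_n^k by
  extensional functions on the index set {0..<k} (value undefined outside).\<close>

definition Zn :: "int \<Rightarrow> int set" where
  "Zn n = {0..<n}"

definition Znk :: "int \<Rightarrow> nat \<Rightarrow> (nat \<Rightarrow> int) set" where
  "Znk n k = PiE {0..<k} (\<lambda>_. Zn n)"

definition grdh_keys :: "int \<Rightarrow> nat \<Rightarrow> (nat \<Rightarrow> int) \<Rightarrow> (nat \<Rightarrow> int) set" where
  "grdh_keys n k t = {x \<in> Znk n k. \<forall>i<k. gcd (x i) n = t i}"

definition grdh_hash :: "int \<Rightarrow> nat \<Rightarrow> (nat \<Rightarrow> int) \<Rightarrow> (nat \<Rightarrow> int) \<Rightarrow> int" where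
  "grdh_hash n k x m = (\<Sum>i<k. m i * x i) mod n"

definition grdh_diff_prob ::
  "int \<Rightarrow> nat \<Rightarrow> (nat \<Rightarrow> int) \<Rightarrow> (nat \<Rightarrow> int) \<Rightarrow> (nat \<Rightarrow> int) \<Rightarrow> int \<Rightarrow> real" where
  "grdh_diff_prob n k t m m' b =
     real (card {x \<in> grdh_keys n k t. (grdh_hash n k x m - grdh_hash n k x m') mod n = b})
     / real (card (grdh_keys n k t))"

definition almost_delta_universal ::
  "int \<Rightarrow> nat \<Rightarrow> (nat \<Rightarrow> int) \<Rightarrow> real \<Rightarrow> bool" where
  "almost_delta_universal n k t \<epsilon> \<longleftrightarrow>
     (\<forall>m\<in>Znk n k. \<forall>m'\<in>Znk n k. \<forall>b\<in>Zn n. m \<noteq> m' \<longrightarrow> grdh_diff_prob n k t m m' b \<le> \<epsilon>)"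

end

theory Submission
  imports Defs "HOL-Number_Theory.Cong"
begin

text \<open>The probability only depends on the difference \<open>d = m - m'\<close>. If some \<open>t\<^sub>j > 1\<close>, the
  difference \<open>d = (n/t\<^sub>j) e\<^sub>j\<close> hashes to \<open>0\<close> under every key; if \<open>n\<close> is even and all keys are
  units, \<open>d = (n/2) e\<^sub>j\<close> hashes to \<open>n/2\<close> under every key. Conversely, for unit keys and
  \<open>d\<^sub>j \<noteq> 0 (mod n)\<close>, multiplying the \<open>j\<close>-th key coordinate by \<open>u = 1, \<dots>, p-1\<close> maps a
  fibre injectively into the key set, because all these \<open>u\<close> and their differences are units
  modulo \<open>n\<close> (\<open>p\<close> being the least prime factor of \<open>n\<close>);
  so each fibre holds at most a share \<open>1/(p-1)\<close> of the keys. For \<open>d = (n/p) e\<^sub>1\<close> the hash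
  value is \<open>(n/p)(x\<^sub>1 mod p)\<close>, so the \<open>p - 1\<close> nonzero residues partition the keys into fibres,
  each of which must then hold exactly that share.\<close>

lemma mem_grdh_keys_iff:
  "x \<in> grdh_keys n k t \<longleftrightarrow>
     x \<in> extensional {0..<k} \<and> (\<forall>i<k. 0 \<le> x i \<and> x i < n \<and> gcd (x i) n = t i)"
  unfolding grdh_keys_def Znk_def Zn_def PiE_def by auto

lemma finite_grdh_keys: "finite (grdh_keys n k t)"
proof (rule finite_subset)
  show "grdh_keys n k t \<subseteq> PiE {0..<k} (\<lambda>_. {0..<n})"
    unfolding grdh_keys_def Znk_def Zn_def by auto
qed (simp add: finite_PiE)

lemma grdh_keys_nonempty:
  assumes "n > 1" and "\<forall>i<k. t i > 0 \<and> t i dvd n"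
  shows "grdh_keys n k t \<noteq> {}"
proof -
  have "gcd (t i mod n) n = t i" if "i < k" for i
    using assms that by (simp add: gcd_mod_left gcd_proj1_if_dvd abs_of_pos)
  then have "(\<lambda>i\<in>{0..<k}. t i mod n) \<in> grdh_keys n k t"
    using assms(1) unfolding mem_grdh_keys_iff by simp
  then show ?thesis by blast
qed

lemma grdh_diff_prob_eq:
  "grdh_diff_prob n k t m m' b =
     real (card {x \<in> grdh_keys n k t. (\<Sum>i<k. (m i - m' i) * x i) mod n = b})
     / real (card (grdh_keys n k t))"
proof -
  have "(grdh_hash n k x m - grdh_hash n k x m') mod n = (\<Sum>i<k. (m i - m' i) * x i) mod n"
    for x
    unfolding grdh_hash_def by (simp add: mod_diff_eq sum_subtractf left_diff_distrib)
  then show ?thesis unfolding grdh_diff_prob_def by simp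
qed

definition coord_vec :: "nat \<Rightarrow> nat \<Rightarrow> int \<Rightarrow> nat \<Rightarrow> int" where
  "coord_vec k j c = (\<lambda>i\<in>{0..<k}. if i = j then c else 0)"

lemma coord_vec_in_Znk: "c \<in> Zn n \<Longrightarrow> 0 < n \<Longrightarrow> coord_vec k j c \<in> Znk n k"
  unfolding coord_vec_def Znk_def Zn_def by auto

lemma coord_vec_eq_iff:
  assumes "j < k"
  shows "coord_vec k j c = coord_vec k j c' \<longleftrightarrow> c = c'"
proof
  assume "coord_vec k j c = coord_vec k j c'"
  then have "coord_vec k j c j = coord_vec k j c' j" by simp
  then show "c = c'" using assms by (simp add: coord_vec_def)
qed simp

lemma sum_coord_vec_mult:
  assumes "j < k"
  shows "(\<Sum>i<k. coord_vec k j c i * x i) = c * x j"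
proof -
  have "(\<Sum>i<k. coord_vec k j c i * x i) = (\<Sum>i<k. if i = j then c * x i else 0)"
    by (rule sum.cong) (simp_all add: coord_vec_def)
  then show ?thesis using assms by simp
qed

lemma grdh_diff_prob_coord_vec:
  assumes "j < k"
  shows "grdh_diff_prob n k t (coord_vec k j c) (coord_vec k j 0) b =
           real (card {x \<in> grdh_keys n k t. (c * x j) mod n = b}) / real (card (grdh_keys n k t))"
proof -
  have "(\<Sum>i<k. (coord_vec k j c i - coord_vec k j 0 i) * x i) = c * x j" for x
    using sum_coord_vec_mult[OF assms] by (simp add: coord_vec_def)
  then show ?thesis unfolding grdh_diff_prob_eq by simp
qed

definition grdh_diff_prob_attained :: "int \<Rightarrow> nat \<Rightarrow> (nat \<Rightarrow> int) \<Rightarrow> real \<Rightarrow> bool" where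
  "grdh_diff_prob_attained n k t q \<longleftrightarrow>
     (\<exists>m\<in>Znk n k. \<exists>m'\<in>Znk n k. \<exists>b\<in>Zn n. m \<noteq> m' \<and> grdh_diff_prob n k t m m' b = q)"

lemma not_almost_delta_universal_if_attained:
  "grdh_diff_prob_attained n k t q \<Longrightarrow> \<epsilon> < q \<Longrightarrow> \<not> almost_delta_universal n k t \<epsilon>"
proof
  assume "grdh_diff_prob_attained n k t q" "\<epsilon> < q" "almost_delta_universal n k t \<epsilon>"
  then obtain m m' b where "m \<in> Znk n k" "m' \<in> Znk n k" "b \<in> Zn n" "m \<noteq> m'"
      "grdh_diff_prob n k t m m' b = q"
    unfolding grdh_diff_prob_attained_def by blast
  then have "q \<le> \<epsilon>" using \<open>almost_delta_universal n k t \<epsilon>\<close>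
    unfolding almost_delta_universal_def by blast
  then show False using \<open>\<epsilon> < q\<close> by simp
qed

lemma grdh_diff_prob_attained_coord_vec:
  assumes "j < k" and "0 < c" and "c < n" and "b \<in> Zn n"
    and "real (card {x \<in> grdh_keys n k t. (c * x j) mod n = b}) / real (card (grdh_keys n k t)) = q"
  shows "grdh_diff_prob_attained n k t q"
  unfolding grdh_diff_prob_attained_def
proof (intro bexI conjI)
  show "coord_vec k j c \<noteq> coord_vec k j 0" using assms(1,2) coord_vec_eq_iff by simp
  show "coord_vec k j c \<in> Znk n k" "coord_vec k j 0 \<in> Znk n k"
    using assms(2,3) by (simp_all add: coord_vec_in_Znk Zn_def)
  show "grdh_diff_prob n k t (coord_vec k j c) (coord_vec k j 0) b = q"
    using assms(1,5) by (simp add: grdh_diff_prob_coord_vec)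
qed (fact assms(4))

lemma grdh_diff_prob_attained_one_if_constant:
  assumes "grdh_keys n k t \<noteq> {}" and "j < k" and "0 < c" and "c < n" and "b \<in> Zn n"
    and "\<forall>x\<in>grdh_keys n k t. (c * x j) mod n = b"
  shows "grdh_diff_prob_attained n k t 1"
proof (rule grdh_diff_prob_attained_coord_vec[OF assms(2-5)])
  have "{x \<in> grdh_keys n k t. (c * x j) mod n = b} = grdh_keys n k t" using assms(6) by blast
  then show "real (card {x \<in> grdh_keys n k t. (c * x j) mod n = b}) / real (card (grdh_keys n k t)) = 1"
    using assms(1) finite_grdh_keys by simp
qed

lemma grdh_diff_prob_attained_one_if_gcd_nontrivial:
  assumes "grdh_keys n k t \<noteq> {}" and "n > 1" and "j < k" and "t j > 1" and "t j dvd n"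
  shows "grdh_diff_prob_attained n k t 1"
proof -
  define c where "c = n div t j"
  have n_eq: "n = t j * c" using assms(5) unfolding c_def by simp
  have "0 < c" using assms(2,4) n_eq zero_less_mult_pos[of "t j" c] by simp
  moreover have "c < n" using assms(2,4) unfolding c_def by (simp add: int_div_less_self)
  moreover have "(c * x j) mod n = 0" if "x \<in> grdh_keys n k t" for x
  proof -
    have "gcd (x j) n = t j" using that assms(3) unfolding mem_grdh_keys_iff by simp
    then have "t j dvd x j" using gcd_dvd1[of "x j" n] by simp
    then obtain a where "x j = t j * a" by blast
    then have "c * x j = n * a" using n_eq by simp
    then show ?thesis by simp
  qed
  ultimately show ?thesis using assms(2)
    by (intro grdh_diff_prob_attained_one_if_constant[OF assms(1,3), of c 0]) (auto simp: Zn_def)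
qed

lemma grdh_diff_prob_attained_one_if_even:
  assumes "grdh_keys n k t \<noteq> {}" and "n > 1" and "even n" and "j < k" and "t j = 1"
  shows "grdh_diff_prob_attained n k t 1"
proof -
  define c where "c = n div 2"
  have n_eq: "n = 2 * c" using assms(3) unfolding c_def by simp
  have c_bounds: "0 < c" "c < n" using assms(2) n_eq by auto
  moreover have "(c * x j) mod n = c" if "x \<in> grdh_keys n k t" for x
  proof -
    have "gcd (x j) n = 1" using that assms(4,5) unfolding mem_grdh_keys_iff by simp
    have "odd (x j)"
    proof
      assume "even (x j)"
      then have "2 dvd gcd (x j) n" using assms(3) by simp
      then show False using \<open>gcd (x j) n = 1\<close> by simp
    qed
    then obtain a where "x j = 2 * a + 1" by (blast elim: oddE)
    then have "c * x j = c + n * a" using n_eq by (simp add: algebra_simps)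
    then show ?thesis using c_bounds by simp
  qed
  ultimately show ?thesis
    by (intro grdh_diff_prob_attained_one_if_constant[OF assms(1,4), of c c]) (auto simp: Zn_def)
qed

lemma grdh_diff_prob_attained_one:
  assumes "n > 1" and "k \<ge> 1" and "\<forall>i<k. t i > 0 \<and> t i dvd n"
    and "\<not> (odd n \<and> (\<forall>i<k. t i = 1))"
  shows "grdh_diff_prob_attained n k t 1"
proof -
  have keys: "grdh_keys n k t \<noteq> {}" using grdh_keys_nonempty assms(1,3) by blast
  show ?thesis
  proof (cases "\<exists>j<k. t j \<noteq> 1")
    case True
    then obtain j where "j < k" "t j > 1" using assms(3) by force
    then show ?thesis
      using grdh_diff_prob_attained_one_if_gcd_nontrivial[OF keys assms(1)] assms(3) by blast
  next
    case False
    then show ?thesis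
      using grdh_diff_prob_attained_one_if_even[OF keys assms(1), of 0] assms(2,4) by auto
  qed
qed

lemma coprime_if_abs_less_min_prime_factor:
  fixes w n p :: int
  assumes "n \<noteq> 0" and "\<forall>q. prime q \<and> q dvd n \<longrightarrow> p \<le> q" and "0 < \<bar>w\<bar>" and "\<bar>w\<bar> < p"
  shows "coprime w n"
proof (rule ccontr)
  assume "\<not> coprime w n"
  then have "\<not> is_unit (gcd w n)" by (simp add: coprime_iff_gcd_eq_1)
  moreover have "gcd w n \<noteq> 0" using assms(1) by simp
  ultimately obtain q where q: "prime q" "q dvd gcd w n" using prime_divisor_exists by blast
  then have "p \<le> q" using assms(2) by simp
  moreover have "q \<le> \<bar>w\<bar>" using q assms(3) by (simp add: zdvd_imp_le)
  ultimately show False using assms(4) by simp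
qed

lemma cong_coord_if_sums_cong:
  fixes D x x' :: "nat \<Rightarrow> int"
  assumes "j < k" and "\<forall>i. i \<noteq> j \<longrightarrow> x i = x' i"
    and "[(\<Sum>i<k. D i * x i) = (\<Sum>i<k. D i * x' i)] (mod n)"
  shows "[D j * x j = D j * x' j] (mod n)"
proof -
  have split: "(\<Sum>i<k. D i * y i) = D j * y j + (\<Sum>i\<in>{..<k}-{j}. D i * y i)" for y
    using assms(1) by (simp add: sum.remove)
  have "(\<Sum>i\<in>{..<k}-{j}. D i * x i) = (\<Sum>i\<in>{..<k}-{j}. D i * x' i)"
    using assms(2) by (intro sum.cong) auto
  then show ?thesis using assms(3) unfolding split by (simp add: cong_add_rcancel)
qed

lemma coprime_key_coord: "x \<in> grdh_keys n k t \<Longrightarrow> j < k \<Longrightarrow> t j = 1 \<Longrightarrow> coprime (x j) n"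
  unfolding mem_grdh_keys_iff by (simp add: coprime_iff_gcd_eq_1)

lemma scale_coord_in_grdh_keys:
  assumes "x \<in> grdh_keys n k t" and "n > 1" and "j < k" and "t j = 1" and "coprime u n"
  shows "x(j := (u * x j) mod n) \<in> grdh_keys n k t"
proof -
  have "coprime (u * x j) n" using assms coprime_key_coord by simp
  then have "gcd ((u * x j) mod n) n = 1"
    using assms(2) by (simp add: gcd_mod_left coprime_iff_gcd_eq_1[symmetric])
  then show ?thesis using assms(1-4) unfolding mem_grdh_keys_iff extensional_def by auto
qed

lemma scale_coord_inj_on:
  fixes n p :: int and D :: "nat \<Rightarrow> int"
  assumes "n > 1" and pmin: "\<forall>q. prime q \<and> q dvd n \<longrightarrow> p \<le> q"
    and "j < k" and "t j = 1" and "\<not> n dvd D j"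
  shows "inj_on (\<lambda>(u, x). x(j := (u * x j) mod n))
           ({1..p-1} \<times> {x \<in> grdh_keys n k t. (\<Sum>i<k. D i * x i) mod n = b})"
proof (rule inj_onI)
  fix ux ux'
  assume ux: "ux \<in> {1..p-1} \<times> {x \<in> grdh_keys n k t. (\<Sum>i<k. D i * x i) mod n = b}"
    and ux': "ux' \<in> {1..p-1} \<times> {x \<in> grdh_keys n k t. (\<Sum>i<k. D i * x i) mod n = b}"
    and f_eq: "(\<lambda>(u, x). x(j := (u * x j) mod n)) ux = (\<lambda>(u, x). x(j := (u * x j) mod n)) ux'"
  obtain u x u' x' where pairs: "ux = (u, x)" "ux' = (u', x')" by fastforce
  have u: "1 \<le> u" "u \<le> p - 1" and u': "1 \<le> u'" "u' \<le> p - 1"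
    and x: "x \<in> grdh_keys n k t" "(\<Sum>i<k. D i * x i) mod n = b"
    and x': "x' \<in> grdh_keys n k t" "(\<Sum>i<k. D i * x' i) mod n = b"
    and eq: "x(j := (u * x j) mod n) = x'(j := (u' * x' j) mod n)"
    using ux ux' f_eq unfolding pairs by auto
  have small_coprime: "coprime w n" if "0 < \<bar>w\<bar>" "\<bar>w\<bar> < p" for w
    using coprime_if_abs_less_min_prime_factor[OF _ pmin that] assms(1) by simp
  have off_j: "\<forall>i. i \<noteq> j \<longrightarrow> x i = x' i" using eq by (metis fun_upd_other)
  have scaled: "[u * x j = u' * x' j] (mod n)" using fun_cong[OF eq, of j] by (simp add: cong_def)
  have coord_cong: "[D j * x j = D j * x' j] (mod n)"
    using cong_coord_if_sums_cong[OF assms(3) off_j] x(2) x'(2) by (simp add: cong_def)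
  have "[(u * D j) * x j = D j * (u * x j)] (mod n)" by (simp add: ac_simps)
  also have "[D j * (u * x j) = D j * (u' * x' j)] (mod n)" using scaled by (rule cong_scalar_left)
  also have "D j * (u' * x' j) = u' * (D j * x' j)" by (simp add: ac_simps)
  also have "[u' * (D j * x' j) = u' * (D j * x j)] (mod n)"
    using cong_sym[OF coord_cong] by (rule cong_scalar_left)
  also have "u' * (D j * x j) = (u' * D j) * x j" by simp
  finally have "[u * D j = u' * D j] (mod n)"
    using cong_mult_rcancel[OF coprime_key_coord[OF x(1) assms(3,4)]] by blast
  then have dvd_diff: "n dvd (u - u') * D j" by (simp add: cong_iff_dvd_diff left_diff_distrib)
  have "u = u'"
  proof (rule ccontr)
    assume "u \<noteq> u'"
    then have "0 < \<bar>u - u'\<bar>" "\<bar>u - u'\<bar> < p" using u u' by auto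
    then have "coprime n (u - u')" using small_coprime coprime_commute by blast
    then show False using dvd_diff assms(5) by (simp add: coprime_dvd_mult_right_iff)
  qed
  then have "[x j = x' j] (mod n)"
    using scaled small_coprime[of u] u by (simp add: cong_mult_lcancel)
  moreover have "0 \<le> x j" "x j < n" "0 \<le> x' j" "x' j < n"
    using x(1) x'(1) assms(3) unfolding mem_grdh_keys_iff by auto
  ultimately have "x j = x' j" using cong_less_imp_eq_int by blast
  with off_j show "ux = ux'" using \<open>u = u'\<close> unfolding pairs by auto
qed

lemma card_fibre_le:
  fixes n p :: int and D :: "nat \<Rightarrow> int"
  assumes "n > 1" and pmin: "\<forall>q. prime q \<and> q dvd n \<longrightarrow> p \<le> q"
    and "j < k" and "t j = 1" and "\<not> n dvd D j"
  shows "nat (p - 1) * card {x \<in> grdh_keys n k t. (\<Sum>i<k. D i * x i) mod n = b}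
           \<le> card (grdh_keys n k t)"
proof -
  let ?E = "{x \<in> grdh_keys n k t. (\<Sum>i<k. D i * x i) mod n = b}"
  have "coprime u n" if "u \<in> {1..p-1}" for u
    using coprime_if_abs_less_min_prime_factor[OF _ pmin, of u] that assms(1) by simp
  then have "(\<lambda>(u, x). x(j := (u * x j) mod n)) ` ({1..p-1} \<times> ?E) \<subseteq> grdh_keys n k t"
    using scale_coord_in_grdh_keys assms(1,3,4) by auto
  then have "card ({1..p-1} \<times> ?E) \<le> card (grdh_keys n k t)"
    using card_inj_on_le[OF scale_coord_inj_on[where t = t and D = D and b = b, OF assms]] finite_grdh_keys by blast
  then show ?thesis by (simp add: card_cartesian_product)
qed

lemma grdh_diff_prob_le:
  fixes n p :: int
  assumes "n > 1" and "p > 1" and pmin: "\<forall>q. prime q \<and> q dvd n \<longrightarrow> p \<le> q"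
    and "\<forall>i<k. t i = 1" and m: "m \<in> Znk n k" and m': "m' \<in> Znk n k" and "m \<noteq> m'"
  shows "grdh_diff_prob n k t m m' b \<le> 1 / real_of_int (p - 1)"
proof -
  have "\<exists>j<k. m j \<noteq> m' j"
  proof (rule ccontr)
    assume "\<not> (\<exists>j<k. m j \<noteq> m' j)"
    then have "m = m'" using m m' unfolding Znk_def by (intro PiE_ext[of m "{0..<k}"]) auto
    then show False using assms(7) by simp
  qed
  then obtain j where j: "j < k" "m j \<noteq> m' j" by blast
  have "\<not> n dvd m j - m' j"
  proof
    assume "n dvd m j - m' j"
    then have "[m j = m' j] (mod n)" by (simp add: cong_iff_dvd_diff)
    moreover have "0 \<le> m j" "m j < n" "0 \<le> m' j" "m' j < n"
      using m m' j(1) unfolding Znk_def Zn_def by auto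
    ultimately show False using j(2) cong_less_imp_eq_int by blast
  qed
  define e where "e = card {x \<in> grdh_keys n k t. (\<Sum>i<k. (m i - m' i) * x i) mod n = b}"
  define N where "N = card (grdh_keys n k t)"
  have "nat (p - 1) * e \<le> N"
    unfolding e_def N_def using card_fibre_le[OF assms(1) pmin j(1)] assms(4) j(1) \<open>\<not> n dvd _\<close>
    by simp
  then have "real (nat (p - 1) * e) \<le> real N" by linarith
  then have "real_of_int (p - 1) * real e \<le> real N" using assms(2) by simp
  moreover have "N > 0"
    using grdh_keys_nonempty[of n k t] assms(1,4) finite_grdh_keys unfolding N_def
    by (simp add: card_gt_0_iff)
  ultimately have "real e / real N \<le> 1 / real_of_int (p - 1)"
    using assms(2) by (simp add: field_simps)
  then show ?thesis unfolding grdh_diff_prob_eq e_def N_def .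
qed

lemma rdh_almost_delta_universal:
  fixes n p :: int
  assumes "n > 1" and "p > 1" and "\<forall>q. prime q \<and> q dvd n \<longrightarrow> p \<le> q" and "\<forall>i<k. t i = 1"
  shows "almost_delta_universal n k t (1 / real_of_int (p - 1))"
  using grdh_diff_prob_le[OF assms] unfolding almost_delta_universal_def by blast

lemma card_eq_if_bounded_partition:
  fixes F :: "'i \<Rightarrow> 'a set"
  assumes "finite I" and "\<forall>r\<in>I. finite (F r)" and "\<forall>r\<in>I. \<forall>r'\<in>I. r \<noteq> r' \<longrightarrow> F r \<inter> F r' = {}"
    and bound: "\<forall>r\<in>I. card I * card (F r) \<le> card (\<Union>(F ` I))" and "r \<in> I"
  shows "card I * card (F r) = card (\<Union>(F ` I))"
proof (rule ccontr)
  let ?U = "card (\<Union>(F ` I))"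
  assume "card I * card (F r) \<noteq> ?U"
  then have "card I * card (F r) < ?U" using bound assms(5) by (simp add: order_less_le)
  then have "(\<Sum>r'\<in>I. card I * card (F r')) < (\<Sum>r'\<in>I. ?U)"
    using bound assms(1,5) by (intro sum_strict_mono_ex1) auto
  also have "\<dots> = card I * ?U" by simp
  also have "\<dots> = (\<Sum>r'\<in>I. card I * card (F r'))"
    using card_UN_disjoint[OF assms(1-3)] by (simp add: sum_distrib_left)
  finally show False by simp
qed

lemma rdh_diff_prob_attained:
  fixes n p :: int
  assumes "n > 1" and "prime p" and "p dvd n" and pmin: "\<forall>q. prime q \<and> q dvd n \<longrightarrow> p \<le> q"
    and t: "\<forall>i<k. t i = 1" and "k \<ge> 1"
  shows "grdh_diff_prob_attained n k t (1 / real_of_int (p - 1))"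
proof -
  let ?K = "grdh_keys n k t"
  have p2: "p \<ge> 2" using assms(2) by (simp add: prime_ge_2_int)
  define s where "s = n div p"
  have n_eq: "n = s * p" using assms(3) unfolding s_def by simp
  have "0 < s * p" using assms(1) n_eq by simp
  then have "0 < s" using p2 by (simp add: zero_less_mult_iff)
  moreover have "s < n" unfolding s_def using assms(1) p2 by (simp add: int_div_less_self)
  ultimately have s_bounds: "0 < s" "s < n" by simp_all
  define F where "F r = {x \<in> ?K. (s * x 0) mod n = s * r}" for r
  have residue: "x 0 mod p \<in> {1..p-1}" if "x \<in> ?K" for x
  proof -
    have gcd_one: "gcd (x 0) n = 1" using that t assms(6) unfolding mem_grdh_keys_iff by simp
    have "\<not> p dvd x 0"
    proof
      assume "p dvd x 0"
      then have "p dvd gcd (x 0) n" using assms(3) by simp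
      then show False using gcd_one p2 by simp
    qed
    moreover have "0 \<le> x 0 mod p" "x 0 mod p < p" using p2 by simp_all
    ultimately show ?thesis by (simp add: dvd_eq_mod_eq_0)
  qed
  have "(s * x 0) mod n = s * (x 0 mod p)" for x unfolding n_eq by (rule mod_mult_mult1)
  then have "x \<in> F (x 0 mod p)" if "x \<in> ?K" for x using that unfolding F_def by simp
  then have K_eq: "?K = (\<Union>r\<in>{1..p-1}. F r)" using residue unfolding F_def by blast
  have finite_F: "\<forall>r\<in>{1..p-1}. finite (F r)" unfolding F_def using finite_grdh_keys by simp
  have disjoint_F: "\<forall>r\<in>{1..p-1}. \<forall>r'\<in>{1..p-1}. r \<noteq> r' \<longrightarrow> F r \<inter> F r' = {}"
    using s_bounds unfolding F_def by auto
  have "\<not> n dvd coord_vec k 0 s 0" using s_bounds assms(6) by (simp add: coord_vec_def zdvd_not_zless)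
  then have "nat (p - 1) * card (F r) \<le> card ?K" for r
    using card_fibre_le[OF assms(1) pmin _ _, of 0 k t "coord_vec k 0 s" "s * r"] t assms(6)
    by (simp add: sum_coord_vec_mult F_def)
  then have "\<forall>r\<in>{1..p-1}. card {1..p-1} * card (F r) \<le> card (\<Union>r\<in>{1..p-1}. F r)"
    unfolding K_eq[symmetric] by simp
  then have "card {1..p-1} * card (F 1) = card (\<Union>r\<in>{1..p-1}. F r)"
    using card_eq_if_bounded_partition[OF _ finite_F disjoint_F] p2 by simp
  then have "card ?K = nat (p - 1) * card (F 1)" unfolding K_eq[symmetric] by simp
  then have card_K: "real (card ?K) = real_of_int (p - 1) * real (card (F 1))"
    using p2 by simp
  have "card ?K > 0"
    using grdh_keys_nonempty[of n k t] assms(1) t finite_grdh_keys by (simp add: card_gt_0_iff)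
  then have "card (F 1) > 0" using card_K by (metis of_nat_0_less_iff mult_zero_right not_gr0 of_nat_0)
  then have ratio: "real (card (F 1)) / real (card ?K) = 1 / real_of_int (p - 1)"
    unfolding card_K by simp
  have "s \<in> Zn n" using s_bounds by (simp add: Zn_def)
  moreover have "F 1 = {x \<in> ?K. (s * x 0) mod n = s}" by (simp add: F_def)
  ultimately show ?thesis
    using grdh_diff_prob_attained_coord_vec[where t = t and j = 0 and c = s and b = s]
      s_bounds assms(6) ratio by simp
qed

lemma min_prime_factor:
  fixes n :: int
  assumes "n > 1"
  defines "p \<equiv> Min {q. prime q \<and> q dvd n}"
  shows "prime p" and "p dvd n" and "\<forall>q. prime q \<and> q dvd n \<longrightarrow> p \<le> q"
proof -
  let ?S = "{q::int. prime q \<and> q dvd n}"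
  have "?S \<subseteq> {0..n}" using assms(1) by (auto simp: zdvd_imp_le prime_ge_0_int)
  then have "finite ?S" by (rule finite_subset) simp
  moreover obtain q where "prime q" "q dvd n"
    using prime_divisor_exists[of n] assms(1) by auto
  then have "?S \<noteq> {}" by auto
  ultimately have "p \<in> ?S" "\<forall>q\<in>?S. p \<le> q" unfolding p_def using Min_in Min_le by auto
  then show "prime p" "p dvd n" "\<forall>q. prime q \<and> q dvd n \<longrightarrow> p \<le> q" by auto
qed

theorem mainTheorem4:
  fixes n :: int and k :: nat and t :: "nat \<Rightarrow> int"
  assumes "n > 1" and "k \<ge> 1"
    and "\<forall>i<k. t i > 0 \<and> t i dvd n"
  shows "((\<exists>\<epsilon><1. almost_delta_universal n k t \<epsilon>) \<longleftrightarrow> (odd n \<and> (\<forall>i<k. t i = 1)))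
       \<and> (odd n \<and> (\<forall>i<k. t i = 1) \<longrightarrow>
            (let p = Min {q::int. prime q \<and> q dvd n} in
              almost_delta_universal n k t (1 / real_of_int (p - 1)) \<and>
              (\<exists>m\<in>Znk n k. \<exists>m'\<in>Znk n k. \<exists>b\<in>Zn n. m \<noteq> m' \<and>
                  grdh_diff_prob n k t m m' b = 1 / real_of_int (p - 1))))"
proof -
  define p where "p = Min {q::int. prime q \<and> q dvd n}"
  have p: "prime p" "p dvd n" "\<forall>q. prime q \<and> q dvd n \<longrightarrow> p \<le> q"
    using min_prime_factor[OF assms(1)] unfolding p_def by auto
  have "p > 1" using p(1) prime_gt_1_int by blast
  have rdh: "almost_delta_universal n k t (1 / real_of_int (p - 1))
      \<and> grdh_diff_prob_attained n k t (1 / real_of_int (p - 1))" if "\<forall>i<k. t i = 1"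
    using rdh_almost_delta_universal[OF assms(1) \<open>p > 1\<close> p(3) that]
      rdh_diff_prob_attained[OF assms(1) p that assms(2)] by blast
  have "1 / real_of_int (p - 1) < 1" if "odd n"
  proof -
    have "p \<noteq> 2" using p(2) that by auto
    then show ?thesis using \<open>p > 1\<close> by simp
  qed
  moreover have "\<not> almost_delta_universal n k t \<epsilon>"
    if "\<epsilon> < 1" and "\<not> (odd n \<and> (\<forall>i<k. t i = 1))" for \<epsilon>
    using not_almost_delta_universal_if_attained[OF grdh_diff_prob_attained_one[OF assms that(2)] that(1)] .
  ultimately show ?thesis
    unfolding Let_def p_def[symmetric] grdh_diff_prob_attained_def[symmetric] using rdh by blast
qed

end
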